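(* Let $F:\mathbb{R}^p\to\mathbb{R}^p$ be single-valued and $T:\mathbb{R}^p\rightrightarrows\mathbb{R}^p$, $\Phi:=F+T$, with $\mathrm{zer}\,\Phi\neq\emptyset$. Assume $T$ is maximally monotone, $F$ is $L$-Lipschitz continuous, and $\langle Fx-Fx^\star,x-x^\star\rangle\ge0$ for all $x\in\mathrm{dom}\,F$ for some $x^\star\in\mathrm{zer}\,\Phi$. Let $\eta>0$ and let $\{(x^k,y^k)\}$ be generated by the reflected forward-backward splitting scheme: start from $x^0\in\mathrm{dom}\,\Phi$, set $x^{-1}:=x^0$, and for $k\ge0$ $$y^k:=2x^k-x^{k-1},\qquad x^{k+1}:=J_{\eta T}(x^k-\eta Fy^k).$$ Define $$\mathcal{V}_k:=\|x^k-x^\star\|^2+2\|x^k-x^{k-1}\|^2+(1-\sqrt2L\eta)\|x^k-y^{k-1}\|^2+2\eta\langle Fy^{k-1}-Fx^\star,x^k-x^{k-1}\rangle.$$ Then for every $k\ge1$, $$\mathcal{V}_k\ge\mathcal{V}_{k+1}+\big[1-(1+\sqrt2)L\eta\big]\big[\|y^k-x^k\|^2+\|x^k-y^{k-1}\|^2\big],$$ $$\mathcal{V}_k\ge(1-L\eta)\|x^k-x^\star\|^2+\big(1-(1+\sqrt2)L\eta\big)\|x^k-y^{k-1}\|^2+2(1-L\eta)\|x^k-x^{k-1}\|^2.$$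
   Context: $J_{\eta T}:=(\mathbb{I}+\eta T)^{-1}$ is the resolvent of $\eta T$. $\mathrm{zer}\,\Phi:=\{x:0\in Fx+Tx\}$. $F$ is $L$-Lipschitz if $\|Fx-Fy\|\le L\|x-y\|$. The range $k\ge1$ is where all quantities in $\mathcal{V}_k$ are defined by the scheme. *)

theory Defs
  imports "HOL-Analysis.Analysis"
begin

definition graph_op :: "('a \<Rightarrow> 'a set) \<Rightarrow> ('a \<times> 'a) set" where
  "graph_op T = {(x, u). u \<in> T x}"

definition monotone_op :: "('a::real_inner \<Rightarrow> 'a set) \<Rightarrow> bool" where
  "monotone_op T \<longleftrightarrow> (\<forall>x y u v. u \<in> T x \<longrightarrow> v \<in> T y \<longrightarrow> inner (u - v) (x - y) \<ge> 0)"

definition maximal_monotone_op :: "('a::real_inner \<Rightarrow> 'a set) \<Rightarrow> bool" where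
  "maximal_monotone_op T \<longleftrightarrow> monotone_op T \<and>
     (\<forall>S. monotone_op S \<and> graph_op T \<subseteq> graph_op S \<longrightarrow> graph_op S = graph_op T)"

definition dom_op :: "('a \<Rightarrow> 'a set) \<Rightarrow> 'a set" where
  "dom_op T = {x. T x \<noteq> {}}"

text \<open>Resolvent \<open>J_{\<eta>T} = (I + \<eta>T)^{-1}\<close> (single-valued for maximally monotone T, \<eta> > 0).\<close>
definition resolvent :: "real \<Rightarrow> ('a::real_vector \<Rightarrow> 'a set) \<Rightarrow> 'a \<Rightarrow> 'a" where
  "resolvent \<eta> T z = (THE x. \<exists>u \<in> T x. z = x + \<eta> *\<^sub>R u)"

definition zer_sum :: "('a::real_vector \<Rightarrow> 'a) \<Rightarrow> ('a \<Rightarrow> 'a set) \<Rightarrow> 'a set" where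
  "zer_sum F T = {x. \<exists>u \<in> T x. F x + u = 0}"

end

theory Submission
  imports Defs
begin

text \<open>
  For maximally monotone T the map I + \<eta>T is onto (Minty), so the scheme is well defined:
  Brouwer's fixed point theorem handles finitely many points of the graph and the finite
  intersection property the whole graph; monotonicity makes the preimage unique.

  Write p = x_k - x*, q = x_(k+1) - x_k, r = x_k - x_(k-1), s = x_k - y_(k-1) and
  c = sqrt 2 L \<eta>. Then V_k - V_(k+1) equals
  |r|^2 + (1 - c)|s|^2 + c|r - q|^2 - 2\<eta> <F y_k - F y_(k-1), r - q>
  plus twice the monotonicity inequalities of T between x_(k+1) and x* and between x_(k+1) and
  x_k, plus 2\<eta> times the monotonicity of F at y_k relative to x*. As y_k - y_(k-1) = r + s,
  Lipschitz continuity and Young's inequality with weights 1 + sqrt 2 and sqrt 2 absorb the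
  cross term. The lower bound on V_k is Young's inequality applied to its inner-product term.
\<close>

definition monotone_set :: "('a::real_inner \<times> 'a) set \<Rightarrow> bool" where
  "monotone_set G \<longleftrightarrow> (\<forall>(y, w)\<in>G. \<forall>(y', w')\<in>G. inner (w - w') (y - y') \<ge> 0)"

lemma monotone_op_iff_monotone_set_graph: "monotone_op T \<longleftrightarrow> monotone_set (graph_op T)"
  by (auto simp: monotone_op_def monotone_set_def graph_op_def)

lemma monotone_set_subset: "monotone_set G \<Longrightarrow> H \<subseteq> G \<Longrightarrow> monotone_set H"
  unfolding monotone_set_def by blast

lemma monotone_set_insert:
  assumes "monotone_set G" and "\<forall>(y, v)\<in>G. inner (u - v) (x - y) \<ge> 0"
  shows "monotone_set (insert (x, u) G)"
proof -
  have "inner (v - u) (y - x) = inner (u - v) (x - y)" for v y :: 'a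
    by (metis inner_minus_left inner_minus_right minus_diff_eq minus_minus)
  then show ?thesis
    using assms unfolding monotone_set_def by auto
qed

lemma weighted_monotone_sum_nonpos:
  fixes G :: "('a::real_inner \<times> 'a) set"
  assumes fin: "finite G" and mono: "monotone_set G"
    and p_nonneg: "\<And>g. g \<in> G \<Longrightarrow> p g \<ge> 0"
    and bary: "(\<Sum>g\<in>G. p g) *\<^sub>R x = (\<Sum>g\<in>G. p g *\<^sub>R fst g)"
  shows "(\<Sum>g\<in>G. p g * inner (a - snd g) (fst g - x)) \<le> 0"
proof (cases "sum p G = 0")
  case True
  then have "\<forall>g\<in>G. p g = 0" using fin p_nonneg by (simp add: sum_nonneg_eq_0_iff)
  then show ?thesis by simp
next
  case False
  then have S_pos: "sum p G > 0" using p_nonneg by (simp add: sum_nonneg order_neq_le_trans)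
  define D where "D g h = p g * p h * inner (a - snd g) (fst g - fst h)" for g h
  have "sum p G * (\<Sum>g\<in>G. p g * inner (a - snd g) (fst g - x))
      = (\<Sum>g\<in>G. p g * inner (a - snd g) (sum p G *\<^sub>R fst g - sum p G *\<^sub>R x))"
    by (simp add: sum_distrib_left inner_diff_right algebra_simps)
  also have "\<dots> = (\<Sum>g\<in>G. \<Sum>h\<in>G. D g h)"
  proof (rule sum.cong[OF refl])
    fix g :: "'a \<times> 'a"
    have "sum p G *\<^sub>R fst g - sum p G *\<^sub>R x = (\<Sum>h\<in>G. p h *\<^sub>R (fst g - fst h))"
      by (subst bary) (simp add: scaleR_sum_left scaleR_diff_right sum_subtractf)
    then show "p g * inner (a - snd g) (sum p G *\<^sub>R fst g - sum p G *\<^sub>R x) = (\<Sum>h\<in>G. D g h)"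
      by (simp add: D_def inner_sum_right sum_distrib_left mult.assoc)
  qed
  also have "\<dots> = (\<Sum>g\<in>G. \<Sum>h\<in>G. D g h + D h g) / 2"
    \<comment> \<open>symmetrising exposes the monotonicity terms; the \<open>a\<close>-terms cancel\<close>
    by (simp add: sum.distrib sum.swap[of D G G])
  also have "\<dots> \<le> 0"
  proof -
    have "D g h + D h g = - (p g * p h * inner (snd g - snd h) (fst g - fst h))" for g h
      by (simp add: D_def algebra_simps inner_diff_left inner_diff_right inner_commute)
    moreover have "p g * p h * inner (snd g - snd h) (fst g - fst h) \<ge> 0"
      if "g \<in> G" "h \<in> G" for g h
      using that mono p_nonneg unfolding monotone_set_def by (fastforce intro!: mult_nonneg_nonneg)
    ultimately show ?thesis by (simp add: sum_nonpos)
  qed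
  finally show ?thesis using S_pos by (simp add: mult_le_0_iff)
qed

lemma brouwer_weighted_barycenter:
  fixes y :: "'i \<Rightarrow> 'a::euclidean_space" and p :: "'i \<Rightarrow> 'a \<Rightarrow> real"
  assumes fin: "finite I" and ne: "I \<noteq> {}"
    and cont: "\<And>i. i \<in> I \<Longrightarrow> continuous_on UNIV (p i)"
    and p_nonneg: "\<And>i z. i \<in> I \<Longrightarrow> p i z \<ge> 0"
  shows "\<exists>x. (\<Sum>i\<in>I. p i x) *\<^sub>R x = (\<Sum>i\<in>I. p i x *\<^sub>R y i)"
proof -
  define C where "C = convex hull (y ` I)"
  define S where "S z = (\<Sum>i\<in>I. p i z)" for z
  define f where "f z = (1 / (1 + S z)) *\<^sub>R (z + (\<Sum>i\<in>I. p i z *\<^sub>R y i))" for z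
  have S_nonneg: "S z \<ge> 0" for z
    unfolding S_def by (simp add: sum_nonneg p_nonneg)
  have "continuous_on C S"
    unfolding S_def by (intro continuous_on_sum continuous_on_subset[OF cont]) auto
  moreover have "continuous_on C (\<lambda>z. \<Sum>i\<in>I. p i z *\<^sub>R y i)"
    by (intro continuous_on_sum continuous_on_scaleR continuous_on_const
        continuous_on_subset[OF cont]) auto
  ultimately have "continuous_on C f"
    unfolding f_def using S_nonneg
    by (intro continuous_on_scaleR continuous_on_divide continuous_on_add continuous_on_const
        continuous_on_id) (auto simp: add_nonneg_eq_0_iff)
  moreover have "f z \<in> C" if "z \<in> C" for z
  proof (cases "S z = 0")
    case True
    then have "\<forall>i\<in>I. p i z = 0" using fin p_nonneg by (simp add: S_def sum_nonneg_eq_0_iff)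
    then show ?thesis using True \<open>z \<in> C\<close> by (simp add: f_def)
  next
    case False
    then have S_pos: "S z > 0" using S_nonneg[of z] by simp
    define v where "v = (\<Sum>i\<in>I. (p i z / S z) *\<^sub>R y i)"
    have "(\<Sum>i\<in>I. p i z *\<^sub>R y i) = S z *\<^sub>R v"
      using S_pos by (simp add: v_def scaleR_sum_right)
    then have "f z = (1 / (1 + S z)) *\<^sub>R z + (S z / (1 + S z)) *\<^sub>R v"
      by (simp add: f_def scaleR_add_right)
    moreover have "(\<Sum>i\<in>I. p i z / S z) = 1"
      using S_pos by (simp add: S_def flip: sum_divide_distrib)
    then have "v \<in> C" unfolding v_def C_def
      using S_pos p_nonneg by (intro convex_sum[OF fin convex_convex_hull]) (auto intro: hull_inc)
    moreover have "1 / (1 + S z) + S z / (1 + S z) = 1"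
      using S_pos by (simp add: field_simps)
    ultimately show ?thesis
      using \<open>z \<in> C\<close> S_pos convexD[OF convex_convex_hull, of z "y ` I" v]
      by (simp add: C_def)
  qed
  moreover have "compact C" "convex C" "C \<noteq> {}"
    using fin ne by (auto simp: C_def finite_imp_compact_convex_hull)
  ultimately obtain x where "f x = x"
    using brouwer[of C f] by blast
  moreover have "(1 + S x) *\<^sub>R f x = x + (\<Sum>i\<in>I. p i x *\<^sub>R y i)"
    using S_nonneg[of x] by (simp add: f_def add_nonneg_eq_0_iff)
  ultimately have "(1 + S x) *\<^sub>R x = x + (\<Sum>i\<in>I. p i x *\<^sub>R y i)"
    by simp
  then show ?thesis
    by (auto simp: S_def algebra_simps)
qed

text \<open>
  Weight each point \<open>(y, w)\<close> by its violation \<open>max 0 \<langle>z - x - w, y - x\<rangle>\<close>. At a fixed point of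
  the weighted barycentre map the weighted violations sum to at most \<open>0\<close> by monotonicity, so
  there is no violation.
\<close>

lemma finite_monotone_set_extension:
  fixes G :: "('a::euclidean_space \<times> 'a) set"
  assumes fin: "finite G" and ne: "G \<noteq> {}" and mono: "monotone_set G"
  shows "\<exists>x. \<forall>(y, w)\<in>G. inner (z - x - w) (x - y) \<ge> 0"
proof -
  define p where "p g x = max 0 (inner (z - x - snd g) (fst g - x))" for g x
  have "continuous_on UNIV (p g)" for g
    unfolding p_def by (intro continuous_intros)
  then obtain x where bary: "(\<Sum>g\<in>G. p g x) *\<^sub>R x = (\<Sum>g\<in>G. p g x *\<^sub>R fst g)"
    using brouwer_weighted_barycenter[OF fin ne, of p fst] by (auto simp: p_def)
  have "(\<Sum>g\<in>G. (p g x)\<^sup>2) = (\<Sum>g\<in>G. p g x * inner (z - x - snd g) (fst g - x))"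
    by (intro sum.cong) (auto simp: p_def power2_eq_square max_def)
  also have "\<dots> \<le> 0"
    by (rule weighted_monotone_sum_nonpos[OF fin mono _ bary]) (simp add: p_def)
  finally have "(\<Sum>g\<in>G. (p g x)\<^sup>2) = 0"
    by (simp add: order_antisym sum_nonneg)
  then have "\<forall>g\<in>G. p g x = 0"
    using fin by (simp add: sum_nonneg_eq_0_iff)
  have "inner (z - x - w) (x - y) \<ge> 0" if "(y, w) \<in> G" for y w
  proof -
    have "max 0 (inner (z - x - w) (y - x)) = 0"
      using that \<open>\<forall>g\<in>G. p g x = 0\<close> unfolding p_def by fastforce
    then show ?thesis
      by (simp add: inner_diff_right)
  qed
  then show ?thesis
    by blast
qed

lemma mem_cball_midpoint_if_inner_nonneg:
  fixes a b x :: "'a::real_inner"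
  assumes "inner (a - x) (x - b) \<ge> 0"
  shows "x \<in> cball (midpoint a b) (dist a b / 2)"
proof -
  define u v where "u = x - a" and "v = x - b"
  have "(norm ((1/2) *\<^sub>R (u + v)))\<^sup>2 = (norm (v - u) / 2)\<^sup>2 + inner u v"
    by (simp add: power2_norm_eq_inner power_divide inner_add_left inner_add_right inner_diff_left
        inner_diff_right inner_commute algebra_simps add_divide_distrib diff_divide_distrib)
  moreover have "(1/2) *\<^sub>R (u + v) = (1/2) *\<^sub>R (x + x) - midpoint a b"
    by (simp add: u_def v_def midpoint_def algebra_simps)
  moreover have "v - u = a - b" "inner (a - x) (x - b) = - inner u v"
    by (simp_all add: u_def v_def flip: inner_minus_left)
  ultimately have "(norm (x - midpoint a b))\<^sup>2 \<le> (dist a b / 2)\<^sup>2"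
    using assms by (simp add: dist_norm)
  then have "norm (x - midpoint a b) \<le> dist a b / 2"
    by (rule power2_le_imp_le) simp
  then show ?thesis
    by (simp add: dist_norm norm_minus_commute)
qed

lemma monotone_set_extension:
  fixes G :: "('a::euclidean_space \<times> 'a) set"
  assumes ne: "G \<noteq> {}" and mono: "monotone_set G"
  shows "\<exists>x. \<forall>(y, w)\<in>G. inner (z - x - w) (x - y) \<ge> 0"
proof -
  define K where "K g = {x. inner (z - x - snd g) (x - fst g) \<ge> 0}" for g
  obtain g0 where g0: "g0 \<in> G" using ne by blast
  have closed_K: "closed (K g)" for g
    unfolding K_def by (intro closed_Collect_le continuous_intros)
  have "K g0 \<subseteq> cball (midpoint (z - snd g0) (fst g0)) (dist (z - snd g0) (fst g0) / 2)"
    using mem_cball_midpoint_if_inner_nonneg[of "z - snd g0"] by (auto simp: K_def algebra_simps)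
  then have "compact (K g0)"
    using closed_K by (meson bounded_cball bounded_subset compact_eq_bounded_closed)
  then have "K g0 \<inter> (\<Inter>g\<in>G. K g) \<noteq> {}"
  proof (rule compact_imp_fip_image)
    fix G' assume "finite G'" "G' \<subseteq> G"
    then obtain x where "\<forall>(y, w)\<in>insert g0 G'. inner (z - x - w) (x - y) \<ge> 0"
      using finite_monotone_set_extension[of "insert g0 G'"] monotone_set_subset[OF mono] g0
      by auto
    then have "x \<in> K g" if "g \<in> insert g0 G'" for g
      using that by (cases g) (auto simp: K_def)
    then show "K g0 \<inter> (\<Inter>g\<in>G'. K g) \<noteq> {}"
      by blast
  qed (rule closed_K)
  then obtain x where x_K: "\<And>g. g \<in> G \<Longrightarrow> x \<in> K g"
    by blast
  have "inner (z - x - w) (x - y) \<ge> 0" if "(y, w) \<in> G" for y w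
    using x_K[OF that] by (simp add: K_def)
  then show ?thesis
    by blast
qed

lemma maximal_monotone_op_memI:
  assumes max: "maximal_monotone_op T"
    and related: "\<And>y v. v \<in> T y \<Longrightarrow> inner (u - v) (x - y) \<ge> 0"
  shows "u \<in> T x"
proof -
  define S where "S w = (if w = x then insert u (T w) else T w)" for w
  have graph_S: "graph_op S = insert (x, u) (graph_op T)"
    by (auto simp: S_def graph_op_def split: if_splits)
  have "monotone_set (graph_op T)"
    using max by (simp add: maximal_monotone_op_def monotone_op_iff_monotone_set_graph)
  then have "monotone_op S"
    unfolding monotone_op_iff_monotone_set_graph graph_S
    by (rule monotone_set_insert) (auto simp: graph_op_def related)
  moreover have "graph_op T \<subseteq> graph_op S"
    by (auto simp: graph_S)
  ultimately have "graph_op S = graph_op T"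
    using max by (simp add: maximal_monotone_op_def)
  moreover have "(x, u) \<in> graph_op S"
    by (simp add: graph_S)
  ultimately show ?thesis
    by (simp add: graph_op_def)
qed

lemma maximal_monotone_op_dom_nonempty:
  assumes "maximal_monotone_op T"
  shows "dom_op T \<noteq> {}"
proof
  assume "dom_op T = {}"
  then have "0 \<in> T 0"
    by (intro maximal_monotone_op_memI[OF assms]) (auto simp: dom_op_def)
  with \<open>dom_op T = {}\<close> show False
    by (auto simp: dom_op_def)
qed

theorem maximal_monotone_op_minty:
  fixes T :: "'a::euclidean_space \<Rightarrow> 'a set"
  assumes max: "maximal_monotone_op T" and eta: "\<eta> > 0"
  shows "\<exists>x. \<exists>u\<in>T x. z = x + \<eta> *\<^sub>R u"
proof -
  define G where "G = {(y, \<eta> *\<^sub>R v) | y v. v \<in> T y}"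
  have "G \<noteq> {}"
    using maximal_monotone_op_dom_nonempty[OF max] by (auto simp: G_def dom_op_def)
  moreover have "monotone_set G"
    using max eta
    by (auto simp: G_def monotone_set_def maximal_monotone_op_def monotone_op_def
        simp flip: scaleR_diff_right intro!: mult_nonneg_nonneg)
  ultimately obtain x where x: "\<forall>(y, w)\<in>G. inner (z - x - w) (x - y) \<ge> 0"
    using monotone_set_extension by blast
  define u where "u = (1 / \<eta>) *\<^sub>R (z - x)"
  have z_eq: "z = x + \<eta> *\<^sub>R u"
    using eta by (simp add: u_def)
  have "inner (u - v) (x - y) \<ge> 0" if "v \<in> T y" for y v
  proof -
    have "inner (z - x - \<eta> *\<^sub>R v) (x - y) \<ge> 0"
      using x that by (auto simp: G_def)
    moreover have "z - x - \<eta> *\<^sub>R v = \<eta> *\<^sub>R (u - v)"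
      using z_eq by (simp add: algebra_simps)
    ultimately show ?thesis
      using eta by (simp add: zero_le_mult_iff)
  qed
  then have "u \<in> T x"
    by (rule maximal_monotone_op_memI[OF max])
  with z_eq show ?thesis
    by blast
qed

lemma monotone_op_resolvent_unique:
  assumes mono: "monotone_op T" and eta: "\<eta> > 0"
    and "u \<in> T x" "z = x + \<eta> *\<^sub>R u" and "u' \<in> T x'" "z = x' + \<eta> *\<^sub>R u'"
  shows "x = x'"
proof -
  have "x - x' = - \<eta> *\<^sub>R (u - u')"
    using assms by (simp add: algebra_simps)
  then have "inner (x - x') (x - x') = - \<eta> * inner (u - u') (x - x')"
    by simp
  also have "\<dots> \<le> 0"
    using mono assms eta by (simp add: monotone_op_def)
  finally show ?thesis
    by (metis inner_gt_zero_iff not_le right_minus_eq)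
qed

lemma resolventE:
  fixes T :: "'a::euclidean_space \<Rightarrow> 'a set"
  assumes "maximal_monotone_op T" and "\<eta> > 0"
  obtains u where "u \<in> T (resolvent \<eta> T z)" "z = resolvent \<eta> T z + \<eta> *\<^sub>R u"
proof -
  have "\<exists>!x. \<exists>u\<in>T x. z = x + \<eta> *\<^sub>R u"
    using maximal_monotone_op_minty[OF assms] monotone_op_resolvent_unique assms
    by (metis maximal_monotone_op_def)
  then have "\<exists>u\<in>T (resolvent \<eta> T z). z = resolvent \<eta> T z + \<eta> *\<^sub>R u"
    unfolding resolvent_def by (rule theI')
  then show ?thesis
    using that by blast
qed

lemma lipschitz_on_norm_diff_le_via:
  assumes "L-lipschitz_on UNIV F"
  shows "norm (F a - F b) \<le> L * (norm (a - c) + norm (c - b))"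
proof -
  have "norm (F a - F b) \<le> L * norm ((a - c) + (c - b))"
    using lipschitz_onD[OF assms] by (simp add: dist_norm)
  also have "\<dots> \<le> L * (norm (a - c) + norm (c - b))"
    using lipschitz_on_nonneg[OF assms] by (intro mult_left_mono norm_triangle_ineq)
  finally show ?thesis .
qed

lemma young_sqrt2:
  fixes A B C :: real
  shows "2 * (A + B) * C \<le> (1 + sqrt 2) * A\<^sup>2 + B\<^sup>2 + sqrt 2 * C\<^sup>2"
proof -
  have "0 \<le> ((1 + sqrt 2) * A - C)\<^sup>2"
    by simp
  also have "\<dots> = (1 + sqrt 2) * ((1 + sqrt 2) * A\<^sup>2 + (sqrt 2 - 1) * C\<^sup>2 - 2 * A * C)"
    by (simp add: power2_eq_square algebra_simps)
  finally have "2 * A * C \<le> (1 + sqrt 2) * A\<^sup>2 + (sqrt 2 - 1) * C\<^sup>2"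
    using add_pos_nonneg[of 1 "sqrt 2"] by (auto simp: zero_le_mult_iff)
  moreover have "2 * B * C \<le> B\<^sup>2 + C\<^sup>2"
    using sum_squares_bound[of B C] by (simp add: power2_eq_square)
  ultimately show ?thesis
    by (simp add: algebra_simps)
qed

text \<open>\<open>rfb_energy F xs L \<eta> (x (k - 1)) (x k) (y (k - 1))\<close> is the paper's \<open>V\<^sub>k\<close>.\<close>

definition rfb_energy :: "('a::real_inner \<Rightarrow> 'a) \<Rightarrow> 'a \<Rightarrow> real \<Rightarrow> real \<Rightarrow> 'a \<Rightarrow> 'a \<Rightarrow> 'a \<Rightarrow> real"
  where "rfb_energy F xs L \<eta> x_prev x y_prev =
    (norm (x - xs))\<^sup>2 + 2 * (norm (x - x_prev))\<^sup>2 + (1 - sqrt 2 * L * \<eta>) * (norm (x - y_prev))\<^sup>2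
      + 2 * \<eta> * inner (F y_prev - F xs) (x - x_prev)"

lemma rfb_energy_lower_bound:
  assumes lip: "L-lipschitz_on UNIV F" and eta: "\<eta> \<ge> 0"
  shows "rfb_energy F xs L \<eta> x_prev x y_prev \<ge> (1 - L * \<eta>) * (norm (x - xs))\<^sup>2
           + (1 - (1 + sqrt 2) * L * \<eta>) * (norm (x - y_prev))\<^sup>2
           + 2 * (1 - L * \<eta>) * (norm (x - x_prev))\<^sup>2"
proof -
  define P R S where "P = norm (x - xs)" and "R = norm (x - x_prev)" and "S = norm (x - y_prev)"
  have L_nonneg: "L \<ge> 0"
    using lip by (rule lipschitz_on_nonneg)
  have "- inner (F y_prev - F xs) (x - x_prev) \<le> norm (F y_prev - F xs) * R"
    using norm_cauchy_schwarz[of "- (F y_prev - F xs)" "x - x_prev"]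
    by (simp add: R_def norm_minus_commute inner_diff_left)
  also have "\<dots> \<le> L * (S + P) * R"
    using lipschitz_on_norm_diff_le_via[OF lip, of y_prev xs x]
    by (intro mult_right_mono) (simp_all add: P_def S_def R_def norm_minus_commute)
  also have "\<dots> \<le> L * ((P\<^sup>2 + S\<^sup>2 + 2 * R\<^sup>2) / 2)"
  proof -
    have "(S + P) * R \<le> (P\<^sup>2 + S\<^sup>2 + 2 * R\<^sup>2) / 2"
      using sum_squares_bound[of P R] sum_squares_bound[of S R]
      by (simp add: power2_eq_square algebra_simps)
    then show ?thesis
      using mult_left_mono L_nonneg by (simp add: mult.assoc)
  qed
  finally have "- (2 * \<eta> * inner (F y_prev - F xs) (x - x_prev))
      \<le> L * \<eta> * (P\<^sup>2 + S\<^sup>2 + 2 * R\<^sup>2)"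
    using mult_left_mono[of _ _ "2 * \<eta>"] eta by (fastforce simp: algebra_simps)
  then show ?thesis
    unfolding rfb_energy_def P_def [symmetric] R_def [symmetric] S_def [symmetric]
    by (simp add: algebra_simps)
qed

lemma rfb_energy_gap_identity:
  fixes p q r s K H :: "'a::real_inner"
  shows "((norm p)\<^sup>2 + 2 * (norm r)\<^sup>2 + (1 - c) * (norm s)\<^sup>2 + 2 * \<eta> * inner K r)
       - ((norm (p + q))\<^sup>2 + 2 * (norm q)\<^sup>2 + (1 - c) * (norm (q - r))\<^sup>2 + 2 * \<eta> * inner (K + H) q)
     = (norm r)\<^sup>2 + (1 - c) * (norm s)\<^sup>2 + c * (norm (r - q))\<^sup>2 - 2 * \<eta> * inner H (r - q)
       + 2 * inner (- q - \<eta> *\<^sub>R (K + H)) (p + q) + 2 * inner (r - q - \<eta> *\<^sub>R H) q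
       + 2 * \<eta> * inner (K + H) (p + r)"
  by (simp add: power2_norm_eq_inner inner_add_left inner_add_right inner_diff_left inner_diff_right
      inner_commute algebra_simps)

lemma lipschitz_cross_term_bound:
  fixes H d :: "'a::real_inner"
  assumes "norm H \<le> L * (A + B)" and "L \<ge> 0" and "\<eta> \<ge> 0"
  shows "2 * \<eta> * inner H d \<le> L * \<eta> * ((1 + sqrt 2) * A\<^sup>2 + B\<^sup>2 + sqrt 2 * (norm d)\<^sup>2)"
proof -
  have "inner H d \<le> L * (A + B) * norm d"
    using norm_cauchy_schwarz[of H d] assms(1) by (meson mult_right_mono norm_ge_zero order_trans)
  also have "\<dots> \<le> L * (((1 + sqrt 2) * A\<^sup>2 + B\<^sup>2 + sqrt 2 * (norm d)\<^sup>2) / 2)"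
    using mult_left_mono[OF young_sqrt2[of A B "norm d"] assms(2)] by (simp add: algebra_simps)
  finally show ?thesis
    using mult_left_mono[of _ _ "2 * \<eta>"] assms(3) by (fastforce simp: algebra_simps)
qed

lemma rfb_energy_descent:
  fixes F :: "'a::real_inner \<Rightarrow> 'a" and T :: "'a \<Rightarrow> 'a set" and x_prev x :: 'a
  defines "y \<equiv> 2 *\<^sub>R x - x_prev"
  assumes mono: "monotone_op T" and lip: "L-lipschitz_on UNIV F"
    and zer: "xs \<in> zer_sum F T" and star: "inner (F y - F xs) (y - xs) \<ge> 0"
    and eta: "\<eta> > 0"
    and step: "u \<in> T x" "x_prev - \<eta> *\<^sub>R F y_prev = x + \<eta> *\<^sub>R u"
    and next_step: "v \<in> T x_next" "x - \<eta> *\<^sub>R F y = x_next + \<eta> *\<^sub>R v"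
  shows "rfb_energy F xs L \<eta> x_prev x y_prev \<ge> rfb_energy F xs L \<eta> x x_next y
           + (1 - (1 + sqrt 2) * L * \<eta>) * ((norm (x - x_prev))\<^sup>2 + (norm (x - y_prev))\<^sup>2)"
proof -
  define p q r s K H
    where "p = x - xs" and "q = x_next - x" and "r = x - x_prev" and "s = x - y_prev"
      and "K = F y_prev - F xs" and "H = F y - F y_prev"
  define c where "c = sqrt 2 * L * \<eta>"
  obtain w where w: "w \<in> T xs" "w = - F xs"
    using zer by (auto simp: zer_sum_def add_eq_0_iff)
  have "inner (v - w) (x_next - xs) \<ge> 0" "inner (v - u) (x_next - x) \<ge> 0"
    using mono step(1) next_step(1) w(1) unfolding monotone_op_def by blast+
  then have "inner (\<eta> *\<^sub>R (v - w)) (x_next - xs) \<ge> 0"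
    and "inner (\<eta> *\<^sub>R (v - u)) (x_next - x) \<ge> 0"
    using eta by simp_all
  moreover have "\<eta> *\<^sub>R (v - w) = - q - \<eta> *\<^sub>R (K + H)" "\<eta> *\<^sub>R (v - u) = r - q - \<eta> *\<^sub>R H"
    using step(2) next_step(2) w(2)
    by (simp_all add: q_def r_def K_def H_def scaleR_diff_right algebra_simps)
  ultimately have mono_next: "inner (- q - \<eta> *\<^sub>R (K + H)) (p + q) \<ge> 0"
    and mono_step: "inner (r - q - \<eta> *\<^sub>R H) q \<ge> 0"
    by (simp_all add: p_def q_def)
  have "K + H = F y - F xs" "p + r = y - xs"
    by (simp_all add: K_def H_def p_def r_def y_def algebra_simps scaleR_2)
  then have star': "\<eta> * inner (K + H) (p + r) \<ge> 0"
    using star eta by simp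
  have "norm H \<le> L * (norm r + norm s)"
    using lipschitz_on_norm_diff_le_via[OF lip, of y y_prev x]
    by (simp add: H_def r_def s_def y_def algebra_simps scaleR_2)
  then have cross: "2 * \<eta> * inner H (r - q)
      \<le> L * \<eta> * ((1 + sqrt 2) * (norm r)\<^sup>2 + (norm s)\<^sup>2 + sqrt 2 * (norm (r - q))\<^sup>2)"
    using lipschitz_on_nonneg[OF lip] eta by (intro lipschitz_cross_term_bound) auto
  have "rfb_energy F xs L \<eta> x_prev x y_prev - rfb_energy F xs L \<eta> x x_next y
     = (norm r)\<^sup>2 + (1 - c) * (norm s)\<^sup>2 + c * (norm (r - q))\<^sup>2 - 2 * \<eta> * inner H (r - q)
       + 2 * inner (- q - \<eta> *\<^sub>R (K + H)) (p + q) + 2 * inner (r - q - \<eta> *\<^sub>R H) q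
       + 2 * \<eta> * inner (K + H) (p + r)"
  proof -
    have "x_next - xs = p + q" "x_next - x = q" "x_next - y = q - r" "F y - F xs = K + H"
      "x - xs = p" "x - x_prev = r" "x - y_prev = s" "F y_prev - F xs = K"
      by (simp_all add: p_def q_def r_def s_def y_def K_def H_def algebra_simps scaleR_2)
    then show ?thesis
      unfolding rfb_energy_def c_def[symmetric] by (simp only: rfb_energy_gap_identity)
  qed
  then show ?thesis
    unfolding r_def[symmetric] s_def[symmetric]
    using mono_next mono_step star' cross by (simp add: c_def algebra_simps)
qed

theorem lemma7:
  fixes F :: "'a::euclidean_space \<Rightarrow> 'a" and T :: "'a \<Rightarrow> 'a set"
    and L \<eta> :: real and xs :: 'a and x y :: "nat \<Rightarrow> 'a" and V :: "nat \<Rightarrow> real"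
  assumes maxmono: "maximal_monotone_op T"
    and lip: "L-lipschitz_on UNIV F"
    and xs_zer: "xs \<in> zer_sum F T"
    and star_mono: "\<forall>z. inner (F z - F xs) (z - xs) \<ge> 0"
    and eta_pos: "\<eta> > 0"
    and x0_dom: "x 0 \<in> dom_op T"
    and y_def: "\<And>k. y k = 2 *\<^sub>R x k - x (k - 1)"
    and x_step: "\<And>k. x (Suc k) = resolvent \<eta> T (x k - \<eta> *\<^sub>R F (y k))"
    and V_def: "\<And>k. V k = (norm (x k - xs))\<^sup>2 + 2 * (norm (x k - x (k - 1)))\<^sup>2
                  + (1 - sqrt 2 * L * \<eta>) * (norm (x k - y (k - 1)))\<^sup>2
                  + 2 * \<eta> * inner (F (y (k - 1)) - F xs) (x k - x (k - 1))"
    and k_ge: "k \<ge> 1"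
  shows "V k \<ge> V (Suc k) + (1 - (1 + sqrt 2) * L * \<eta>) *
                  ((norm (y k - x k))\<^sup>2 + (norm (x k - y (k - 1)))\<^sup>2)
       \<and> V k \<ge> (1 - L * \<eta>) * (norm (x k - xs))\<^sup>2
                  + (1 - (1 + sqrt 2) * L * \<eta>) * (norm (x k - y (k - 1)))\<^sup>2
                  + 2 * (1 - L * \<eta>) * (norm (x k - x (k - 1)))\<^sup>2"
proof -
  obtain m where k: "k = Suc m"
    using k_ge by (cases k) auto
  have mono: "monotone_op T"
    using maxmono by (simp add: maximal_monotone_op_def)
  have y_k: "y k = 2 *\<^sub>R x k - x m"
    by (simp add: y_def k)
  have V_k: "V k = rfb_energy F xs L \<eta> (x m) (x k) (y m)"
    and V_Suc_k: "V (Suc k) = rfb_energy F xs L \<eta> (x k) (x (Suc k)) (2 *\<^sub>R x k - x m)"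
    by (simp_all add: V_def rfb_energy_def k y_def)
  obtain u where "u \<in> T (x k)" "x m - \<eta> *\<^sub>R F (y m) = x k + \<eta> *\<^sub>R u"
    using resolventE[OF maxmono eta_pos] x_step[of m] unfolding k by metis
  moreover obtain v where "v \<in> T (x (Suc k))" "x k - \<eta> *\<^sub>R F (y k) = x (Suc k) + \<eta> *\<^sub>R v"
    using resolventE[OF maxmono eta_pos] x_step[of k] by metis
  ultimately have "V k \<ge> V (Suc k)
      + (1 - (1 + sqrt 2) * L * \<eta>) * ((norm (x k - x m))\<^sup>2 + (norm (x k - y m))\<^sup>2)"
    unfolding V_k V_Suc_k y_k using star_mono eta_pos
    by (intro rfb_energy_descent[OF mono lip xs_zer]) auto
  moreover have "norm (y k - x k) = norm (x k - x m)"
    by (simp add: y_k algebra_simps scaleR_2)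
  moreover have "V k \<ge> (1 - L * \<eta>) * (norm (x k - xs))\<^sup>2
      + (1 - (1 + sqrt 2) * L * \<eta>) * (norm (x k - y m))\<^sup>2 + 2 * (1 - L * \<eta>) * (norm (x k - x m))\<^sup>2"
    unfolding V_k using eta_pos by (intro rfb_energy_lower_bound[OF lip]) simp
  ultimately show ?thesis
    by (simp add: k)
qed

end
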